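(* Let $c_1 > 0$ be a real number, let $k \ge 2$ be an integer, and let $G$ be a finite simple graph with $\mathrm{mad}(G) < c_1 + k$. Then there exists a partition $V(G) = A \uplus B$ such that $\mathrm{mad}(G[A]) < c_1$ and $\mathrm{mad}(G[B]) < 2k - 2$.
   Context: $\mathrm{mad}(G) := \max_{H \subseteq G,\, V(H)\neq\emptyset} \frac{2|E(H)|}{|V(H)|}$ (maximum average degree over nonempty subgraphs); by convention the graph with empty vertex set has $\mathrm{mad} = -\infty$. *)

theory Defs
  imports "HOL-Analysis.Analysis" "HOL-Library.Extended_Real"
begin

definition simple_graph :: "'a set \<Rightarrow> 'a set set \<Rightarrow> bool" where
  "simple_graph V E \<longleftrightarrow> finite V \<and> (\<forall>e\<in>E. e \<subseteq> V \<and> card e = 2)"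

definition induced_edges :: "'a set set \<Rightarrow> 'a set \<Rightarrow> 'a set set" where
  "induced_edges E S = {e \<in> E. e \<subseteq> S}"

definition is_subgraph :: "'a set \<Rightarrow> 'a set set \<Rightarrow> 'a set \<Rightarrow> 'a set set \<Rightarrow> bool" where
  "is_subgraph W F V E \<longleftrightarrow> W \<subseteq> V \<and> F \<subseteq> E \<and> (\<forall>e\<in>F. e \<subseteq> W)"

text \<open>Maximum average degree, over nonempty subgraphs; the supremum of the
  empty set in ereal is -\<infinity>, matching the convention for the empty graph.\<close>
definition mad :: "'a set \<Rightarrow> 'a set set \<Rightarrow> ereal" where
  "mad V E = (SUP H \<in> {(W, F). is_subgraph W F V E \<and> W \<noteq> {}}.
                 ereal (2 * real (card (snd H)) / real (card (fst H))))"

end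

theory Submission
  imports Defs
begin

text \<open>A fractional form of Hakimi's orientation theorem turns \<open>mad(G) < c\<^sub>1 + k\<close> into a
  splitting of every edge into two integer shares summing to \<open>N\<close> such that each vertex receives
  less than \<open>N (c\<^sub>1 + k) / 2\<close>, and such that every vertex set contains a source, i.e. a vertex
  receiving at most half of each edge inside the set; a splitting of minimal potential has both
  properties. Then vertices are peeled greedily with a budget of \<open>k - 1\<close> each: a source among
  the vertices of nonnegative budget is put into \<open>B\<close>, and each neighbour of nonnegative budget
  loses one unit of budget and at least \<open>N/2\<close> of its load. When all budgets are negative, the
  remaining vertices form \<open>A\<close>; their loads inside \<open>A\<close> are below \<open>N c\<^sub>1 / 2\<close>, so \<open>G[A]\<close> has
  average degree below \<open>c\<^sub>1\<close> everywhere, while the peeling order makes \<open>G[B]\<close>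
  \<open>(k - 1)\<close>-degenerate.\<close>


section \<open>Degrees and edge counts\<close>

definition degree_in :: "'a set set \<Rightarrow> 'a set \<Rightarrow> 'a \<Rightarrow> nat" where
  "degree_in E Y x = card {u \<in> Y. {u, x} \<in> E}"

lemma degree_in_insert:
  assumes "finite F" "v \<notin> F"
  shows "degree_in E (insert v F) z = degree_in E F z + (if {v, z} \<in> E then 1 else 0)"
proof -
  have "{u \<in> insert v F. {u, z} \<in> E}
      = (if {v, z} \<in> E then insert v {u \<in> F. {u, z} \<in> E} else {u \<in> F. {u, z} \<in> E})"
    by auto
  then show ?thesis
    using assms by (simp add: degree_in_def)
qed

lemma degree_in_mono: "finite Y \<Longrightarrow> X \<subseteq> Y \<Longrightarrow> degree_in E X z \<le> degree_in E Y z"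
  unfolding degree_in_def by (rule card_mono) auto

lemma degree_in_le_card: "finite Y \<Longrightarrow> degree_in E Y z \<le> card Y"
  unfolding degree_in_def by (rule card_mono) auto

lemma degree_in_singleton:
  assumes "\<forall>e\<in>E. card e = 2"
  shows "degree_in E {v} v = 0"
proof -
  have "{u \<in> {v}. {u, v} \<in> E} = {}"
    using assms by force
  then show ?thesis
    unfolding degree_in_def by (metis card.empty)
qed

lemma degree_in_le_remove:
  assumes "finite Y"
  shows "degree_in E Y z \<le> degree_in E (Y - {v}) z + (if {z, v} \<in> E then 1 else 0)"
proof -
  have "degree_in E Y z \<le> degree_in E (insert v (Y - {v})) z"
    using assms by (intro degree_in_mono) auto
  also have "\<dots> = degree_in E (Y - {v}) z + (if {z, v} \<in> E then 1 else 0)"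
    using assms degree_in_insert[of "Y - {v}" v E z] by (simp add: insert_commute)
  finally show ?thesis .
qed

lemma finite_induced_edges: "finite X \<Longrightarrow> finite (induced_edges E X)"
  unfolding induced_edges_def by (rule finite_subset[of _ "Pow X"]) auto

lemma card_induced_edges_insert:
  assumes edges: "\<forall>e\<in>E. card e = 2" and F: "finite F" "z \<notin> F"
  shows "card (induced_edges E (insert z F)) = card (induced_edges E F) + degree_in E F z"
proof -
  let ?nbrs = "{u \<in> F. {u, z} \<in> E}"
  have "induced_edges E (insert z F) = induced_edges E F \<union> (\<lambda>u. {u, z}) ` ?nbrs"
    using edges F(2) by (fastforce simp: induced_edges_def card_2_iff insert_commute)
  moreover have "induced_edges E F \<inter> (\<lambda>u. {u, z}) ` ?nbrs = {}"
    using F(2) by (auto simp: induced_edges_def)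
  moreover have "inj_on (\<lambda>u. {u, z}) ?nbrs"
    using F(2) by (auto simp: inj_on_def doubleton_eq_iff)
  ultimately show ?thesis
    using F by (simp add: card_Un_disjoint finite_induced_edges card_image degree_in_def)
qed

lemma induced_edges_empty: "\<forall>e\<in>E. card e = 2 \<Longrightarrow> induced_edges E {} = {}"
  unfolding induced_edges_def by force

lemma induced_edges_induced: "X \<subseteq> S \<Longrightarrow> induced_edges (induced_edges E S) X = induced_edges E X"
  unfolding induced_edges_def by auto

section \<open>Maximum average degree\<close>

definition avg_degree_below :: "'a set set \<Rightarrow> real \<Rightarrow> 'a set \<Rightarrow> bool" where
  "avg_degree_below E c S \<longleftrightarrow>
     (\<forall>X\<subseteq>S. X \<noteq> {} \<longrightarrow> 2 * real (card (induced_edges E X)) < c * real (card X))"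

lemma avg_degree_below_if_mad_less:
  assumes "finite V" and "mad V E < ereal c"
  shows "avg_degree_below E c V"
  unfolding avg_degree_below_def
proof (intro allI impI)
  fix X assume "X \<subseteq> V" "X \<noteq> {}"
  then have "(X, induced_edges E X) \<in> {(W, F). is_subgraph W F V E \<and> W \<noteq> {}}"
    unfolding is_subgraph_def induced_edges_def by auto
  with \<open>mad V E < ereal c\<close>
  have "(\<lambda>H. ereal (2 * real (card (snd H)) / real (card (fst H)))) (X, induced_edges E X) < ereal c"
    unfolding mad_def by (rule SUP_lessD)
  then have "ereal (2 * real (card (induced_edges E X)) / real (card X)) < ereal c"
    by simp
  moreover have "0 < real (card X)"
    using \<open>X \<subseteq> V\<close> \<open>X \<noteq> {}\<close> \<open>finite V\<close> by (simp add: card_gt_0_iff finite_subset)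
  ultimately show "2 * real (card (induced_edges E X)) < c * real (card X)"
    by (simp add: divide_less_eq)
qed

lemma mad_less_if_avg_degree_below:
  assumes "finite V" and "\<forall>e\<in>E. e \<subseteq> V" and "avg_degree_below E c V"
  shows "mad V E < ereal c"
proof -
  let ?ratio = "\<lambda>H :: 'a set \<times> 'a set set. ereal (2 * real (card (snd H)) / real (card (fst H)))"
  let ?I = "{(W, F). is_subgraph W F V E \<and> W \<noteq> {}}"
  have "?I \<subseteq> Pow V \<times> Pow E"
    unfolding is_subgraph_def by auto
  moreover have "E \<subseteq> Pow V"
    using assms(2) by blast
  then have "finite (Pow V \<times> Pow E)"
    using \<open>finite V\<close> finite_subset by fastforce
  ultimately have "finite ?I"
    by (rule finite_subset)
  moreover have ratio_less: "?ratio H < ereal c" if "H \<in> ?I" for H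
  proof -
    obtain W F where "H = (W, F)" "is_subgraph W F V E" "W \<noteq> {}"
      using \<open>H \<in> ?I\<close> by blast
    then have H: "H = (W, F)" "W \<subseteq> V" "W \<noteq> {}" "F \<subseteq> induced_edges E W"
      unfolding is_subgraph_def induced_edges_def by auto
    have "finite W"
      using H(2) \<open>finite V\<close> finite_subset by blast
    then have "card F \<le> card (induced_edges E W)"
      using H(4) by (intro card_mono finite_induced_edges)
    moreover have "2 * real (card (induced_edges E W)) < c * real (card W)"
      using \<open>avg_degree_below E c V\<close> H(2,3) unfolding avg_degree_below_def by blast
    moreover have "0 < real (card W)"
      using \<open>finite W\<close> \<open>W \<noteq> {}\<close> by (simp add: card_gt_0_iff)
    ultimately show ?thesis
      using H(1) by (simp add: divide_less_eq)
  qed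
  show ?thesis
  proof (cases "?I = {}")
    case True
    show ?thesis
      unfolding mad_def True by (simp add: bot_ereal_def)
  next
    case False
    then show ?thesis
      unfolding mad_def using \<open>finite ?I\<close> ratio_less by (simp add: finite_Sup_less_iff)
  qed
qed

lemma mad_less_iff_avg_degree_below:
  assumes "finite V" and "\<forall>e\<in>E. e \<subseteq> V"
  shows "mad V E < ereal c \<longleftrightarrow> avg_degree_below E c V"
proof
  show "mad V E < ereal c \<Longrightarrow> avg_degree_below E c V"
    by (rule avg_degree_below_if_mad_less[OF assms(1)])
  show "avg_degree_below E c V \<Longrightarrow> mad V E < ereal c"
    by (rule mad_less_if_avg_degree_below[OF assms])
qed

lemma mad_induced_less_iff_avg_degree_below:
  assumes "finite S"
  shows "mad S (induced_edges E S) < ereal c \<longleftrightarrow> avg_degree_below E c S"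
proof -
  have "\<forall>e\<in>induced_edges E S. e \<subseteq> S"
    by (simp add: induced_edges_def)
  then have "mad S (induced_edges E S) < ereal c \<longleftrightarrow> avg_degree_below (induced_edges E S) c S"
    by (rule mad_less_iff_avg_degree_below[OF assms])
  also have "\<dots> \<longleftrightarrow> avg_degree_below E c S"
    unfolding avg_degree_below_def by (auto simp: induced_edges_induced)
  finally show ?thesis .
qed

lemma avg_degree_below_uniform_slack:
  assumes "finite V" "avg_degree_below E M V"
  obtains \<mu> :: real where "0 < \<mu>"
    and "\<And>X. X \<subseteq> V \<Longrightarrow> X \<noteq> {} \<Longrightarrow> 2 * real (card (induced_edges E X)) \<le> (M - \<mu>) * real (card X)"
proof -
  define slack where "slack X = M - 2 * real (card (induced_edges E X)) / real (card X)" for X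
  define \<mu> where "\<mu> = Min (insert 1 (slack ` {X. X \<subseteq> V \<and> X \<noteq> {}}))"
  have pos: "0 < real (card X)" if "X \<subseteq> V" "X \<noteq> {}" for X
    using that \<open>finite V\<close> by (simp add: card_gt_0_iff finite_subset)
  have "finite {X. X \<subseteq> V \<and> X \<noteq> {}}"
    using \<open>finite V\<close> by simp
  moreover have "0 < slack X" if "X \<subseteq> V" "X \<noteq> {}" for X
    using \<open>avg_degree_below E M V\<close> that pos[OF that] unfolding avg_degree_below_def slack_def
    by (simp add: divide_less_eq)
  ultimately have "finite (slack ` {X. X \<subseteq> V \<and> X \<noteq> {}})" "\<forall>X\<in>{X. X \<subseteq> V \<and> X \<noteq> {}}. 0 < slack X"
    by auto
  then have "0 < \<mu>"
    unfolding \<mu>_def by (simp add: Min_gr_iff)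
  moreover have "2 * real (card (induced_edges E X)) \<le> (M - \<mu>) * real (card X)"
    if "X \<subseteq> V" "X \<noteq> {}" for X
  proof -
    have "\<mu> \<le> slack X"
      unfolding \<mu>_def using \<open>finite (slack ` _)\<close> that by (intro Min_le) auto
    then have "2 * real (card (induced_edges E X)) / real (card X) \<le> M - \<mu>"
      unfolding slack_def by simp
    then show ?thesis
      using pos[OF that] by (simp add: pos_divide_le_eq)
  qed
  ultimately show ?thesis
    using that by blast
qed

section \<open>Degeneracy with variable bounds\<close>

text \<open>For constant \<open>h = (\<lambda>_. d)\<close> this is \<open>d\<close>-degeneracy; the greedy construction below
  needs vertex-dependent bounds.\<close>

definition degenerate :: "'a set set \<Rightarrow> ('a \<Rightarrow> int) \<Rightarrow> 'a set \<Rightarrow> bool" where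
  "degenerate E h B \<longleftrightarrow> (\<forall>Y\<subseteq>B. Y \<noteq> {} \<longrightarrow> (\<exists>z\<in>Y. int (degree_in E Y z) \<le> h z))"

lemma degenerate_insert:
  assumes edges: "\<forall>e\<in>E. card e = 2" and "finite B" and "0 \<le> h v"
    and degen: "degenerate E (\<lambda>x. if {x, v} \<in> E \<and> 0 \<le> h x then h x - 1 else h x) B"
  shows "degenerate E h (insert v B)"
  unfolding degenerate_def
proof (intro allI impI)
  fix Y assume Y: "Y \<subseteq> insert v B" "Y \<noteq> {}"
  then have "finite Y"
    using \<open>finite B\<close> finite_subset by blast
  show "\<exists>z\<in>Y. int (degree_in E Y z) \<le> h z"
  proof (cases "Y - {v} = {}")
    case True
    then have "Y = {v}"
      using Y(2) by auto
    then show ?thesis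
      using degree_in_singleton[OF edges] \<open>0 \<le> h v\<close> by simp
  next
    case False
    moreover have "Y - {v} \<subseteq> B"
      using Y(1) by blast
    ultimately obtain z where "z \<in> Y - {v}"
      and z: "int (degree_in E (Y - {v}) z) \<le> (if {z, v} \<in> E \<and> 0 \<le> h z then h z - 1 else h z)"
      using degen unfolding degenerate_def by blast
    note deg = degree_in_le_remove[OF \<open>finite Y\<close>, of E z v]
    have "int (degree_in E Y z) \<le> h z"
    proof (cases "{z, v} \<in> E \<and> 0 \<le> h z")
      case True
      then have "int (degree_in E Y z) \<le> int (degree_in E (Y - {v}) z) + 1"
        using deg by simp
      moreover have "int (degree_in E (Y - {v}) z) \<le> h z - 1"
        using z True by simp
      ultimately show ?thesis
        by linarith
    next
      case False
      moreover have "0 \<le> int (degree_in E (Y - {v}) z)"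
        by simp
      ultimately have "{z, v} \<notin> E" "int (degree_in E (Y - {v}) z) \<le> h z"
        using z by (auto split: if_splits)
      then show ?thesis
        using deg by simp
    qed
    then show ?thesis
      using \<open>z \<in> Y - {v}\<close> by blast
  qed
qed

lemma card_induced_edges_le_if_degenerate:
  assumes edges: "\<forall>e\<in>E. card e = 2" and degen: "degenerate E (\<lambda>_. int d) B"
    and "finite Y" "Y \<subseteq> B"
  shows "card (induced_edges E Y) \<le> d * (card Y - 1)"
  using \<open>finite Y\<close> \<open>Y \<subseteq> B\<close>
proof (induction Y rule: finite_psubset_induct)
  case (psubset Y)
  show ?case
  proof (cases "Y = {}")
    case True
    then show ?thesis
      using induced_edges_empty[OF edges] by simp
  next
    case False
    then obtain z where "z \<in> Y" and deg_z: "int (degree_in E Y z) \<le> int d"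
      using degen psubset.prems unfolding degenerate_def by blast
    have "Y = insert z (Y - {z})"
      using \<open>z \<in> Y\<close> by blast
    then have split: "card (induced_edges E Y) = card (induced_edges E (Y - {z})) + degree_in E (Y - {z}) z"
      using card_induced_edges_insert[OF edges, of "Y - {z}" z] psubset.hyps(1) by simp
    have IH: "card (induced_edges E (Y - {z})) \<le> d * (card (Y - {z}) - 1)"
      using psubset \<open>z \<in> Y\<close> by blast
    have "degree_in E (Y - {z}) z \<le> d"
      using degree_in_mono[of Y "Y - {z}" E z] psubset.hyps(1) deg_z by simp
    moreover have "degree_in E (Y - {z}) z \<le> card (Y - {z})"
      using psubset.hyps(1) by (intro degree_in_le_card) simp
    moreover have "a + b \<le> d * m" if "a \<le> d * (m - 1)" "b \<le> d" "b \<le> m" for a b m :: nat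
      using that by (cases m) simp_all
    ultimately have "card (induced_edges E Y) \<le> d * card (Y - {z})"
      unfolding split using IH by blast
    then show ?thesis
      using \<open>z \<in> Y\<close> psubset.hyps(1) by simp
  qed
qed

lemma avg_degree_below_if_degenerate:
  assumes edges: "\<forall>e\<in>E. card e = 2" and "degenerate E (\<lambda>_. int d) B" "finite B" "0 < d"
  shows "avg_degree_below E (2 * real d) B"
  unfolding avg_degree_below_def
proof (intro allI impI)
  fix Y assume "Y \<subseteq> B" "Y \<noteq> {}"
  then have "finite Y"
    using \<open>finite B\<close> finite_subset by blast
  then have "1 \<le> card Y"
    using \<open>Y \<noteq> {}\<close> by (simp add: Suc_le_eq card_gt_0_iff)
  have "real (card (induced_edges E Y)) \<le> real (d * (card Y - 1))"
    using card_induced_edges_le_if_degenerate[OF assms(1,2) \<open>finite Y\<close> \<open>Y \<subseteq> B\<close>]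
    by (simp only: of_nat_le_iff)
  also have "\<dots> = real d * (real (card Y) - 1)"
    using \<open>1 \<le> card Y\<close> by (simp add: of_nat_diff)
  finally show "2 * real (card (induced_edges E Y)) < 2 * real d * real (card Y)"
    using \<open>0 < d\<close> by (simp add: algebra_simps)
qed

section \<open>Fractional orientations\<close>

text \<open>Edge \<open>uv\<close> is split into the share \<open>y u v\<close> received by \<open>v\<close> and the share \<open>y v u\<close>
  received by \<open>u\<close>; scaling all shares by \<open>N\<close> keeps them integral.\<close>

definition fractional_orientation :: "'a set set \<Rightarrow> int \<Rightarrow> ('a \<Rightarrow> 'a \<Rightarrow> int) \<Rightarrow> bool" where
  "fractional_orientation E N y \<longleftrightarrow>
     (\<forall>u v. {u, v} \<notin> E \<longrightarrow> y u v = 0) \<and>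
     (\<forall>u v. {u, v} \<in> E \<longrightarrow> 0 \<le> y u v \<and> y u v + y v u = N)"

definition in_load :: "('a \<Rightarrow> 'a \<Rightarrow> int) \<Rightarrow> 'a set \<Rightarrow> 'a \<Rightarrow> int" where
  "in_load y S x = (\<Sum>u\<in>S. y u x)"

lemma fractional_orientation_nonneg: "fractional_orientation E N y \<Longrightarrow> 0 \<le> y u v"
  unfolding fractional_orientation_def by (cases "{u, v} \<in> E") auto

lemma fractional_orientation_pair:
  "fractional_orientation E N y \<Longrightarrow> y u v + y v u = (if {u, v} \<in> E then N else 0)"
  unfolding fractional_orientation_def by (auto simp: insert_commute)

lemma in_load_mono:
  "fractional_orientation E N y \<Longrightarrow> finite S \<Longrightarrow> X \<subseteq> S \<Longrightarrow> in_load y X x \<le> in_load y S x"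
  unfolding in_load_def by (rule sum_mono2) (auto intro: fractional_orientation_nonneg)

lemma sum_in_load:
  assumes y: "fractional_orientation E N y" and edges: "\<forall>e\<in>E. card e = 2" and "finite X"
  shows "(\<Sum>x\<in>X. in_load y X x) = N * int (card (induced_edges E X))"
  using \<open>finite X\<close>
proof (induction X rule: finite_induct)
  case empty
  then show ?case
    using induced_edges_empty[OF edges] by (simp add: in_load_def)
next
  case (insert z F)
  have "y z z = 0"
    using fractional_orientation_pair[OF y, of z z] edges fractional_orientation_nonneg[OF y, of z z]
    by (fastforce split: if_splits)
  then have "(\<Sum>x\<in>insert z F. in_load y (insert z F) x)
      = (\<Sum>x\<in>F. in_load y F x) + (\<Sum>x\<in>F. y x z + y z x)"
    using insert.hyps by (simp add: in_load_def sum.distrib)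
  also have "(\<Sum>x\<in>F. y x z + y z x) = (\<Sum>x\<in>F. if {x, z} \<in> E then N else 0)"
    using fractional_orientation_pair[OF y] by simp
  also have "\<dots> = N * int (degree_in E F z)"
    using insert.hyps by (simp add: sum.If_cases Int_def degree_in_def)
  finally show ?case
    using insert edges by (simp add: card_induced_edges_insert algebra_simps)
qed

lemma avg_degree_below_if_in_load_bound:
  assumes y: "fractional_orientation E N y" and edges: "\<forall>e\<in>E. card e = 2" and "0 < N"
    and "finite S" and load: "\<forall>x\<in>S. 2 * real_of_int (in_load y S x) < real_of_int N * c"
  shows "avg_degree_below E c S"
  unfolding avg_degree_below_def
proof (intro allI impI)
  fix X assume "X \<subseteq> S" "X \<noteq> {}"
  then have "finite X"
    using \<open>finite S\<close> finite_subset by blast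
  have "real_of_int N * (2 * real (card (induced_edges E X))) = 2 * (\<Sum>x\<in>X. real_of_int (in_load y X x))"
    using arg_cong[OF sum_in_load[OF y edges \<open>finite X\<close>], of real_of_int] by simp
  also have "\<dots> \<le> (\<Sum>x\<in>X. 2 * real_of_int (in_load y S x))"
    using in_load_mono[OF y \<open>finite S\<close> \<open>X \<subseteq> S\<close>] by (simp add: sum_distrib_left sum_mono)
  also have "\<dots> < (\<Sum>x\<in>X. real_of_int N * c)"
    using load \<open>X \<subseteq> S\<close> \<open>finite X\<close> \<open>X \<noteq> {}\<close> by (intro sum_strict_mono) auto
  also have "\<dots> = real_of_int N * (c * real (card X))"
    by simp
  finally show "2 * real (card (induced_edges E X)) < c * real (card X)"
    using \<open>0 < N\<close> by simp
qed

lemma in_load_remove_source: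
  assumes y: "fractional_orientation E N y" and "finite S" "v \<in> S"
    and load: "\<forall>x\<in>S. 2 * real_of_int (in_load y S x) < real_of_int N * (c + real_of_int (h x) + 1)"
    and source: "\<forall>x\<in>S. 0 \<le> h x \<longrightarrow> 2 * y x v \<le> N"
  shows "\<forall>x\<in>S - {v}. 2 * real_of_int (in_load y (S - {v}) x)
    < real_of_int N * (c + real_of_int (if {x, v} \<in> E \<and> 0 \<le> h x then h x - 1 else h x) + 1)"
proof
  fix x assume "x \<in> S - {v}"
  have removed: "in_load y (S - {v}) x = in_load y S x - y v x"
    using \<open>finite S\<close> \<open>v \<in> S\<close> by (simp add: in_load_def sum_diff1)
  have load_x: "2 * real_of_int (in_load y S x) < real_of_int N * (c + real_of_int (h x) + 1)"
    using load \<open>x \<in> S - {v}\<close> by blast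
  show "2 * real_of_int (in_load y (S - {v}) x)
    < real_of_int N * (c + real_of_int (if {x, v} \<in> E \<and> 0 \<le> h x then h x - 1 else h x) + 1)"
  proof (cases "{x, v} \<in> E \<and> 0 \<le> h x")
    case True
    then have "N \<le> 2 * y v x"
      using source \<open>x \<in> S - {v}\<close> fractional_orientation_pair[OF y, of x v] by auto
    then have "real_of_int (2 * in_load y (S - {v}) x) \<le> real_of_int (2 * in_load y S x - N)"
      unfolding removed of_int_le_iff by (simp add: algebra_simps)
    then show ?thesis
      using load_x True by (simp add: algebra_simps)
  next
    case False
    have "real_of_int (in_load y (S - {v}) x) \<le> real_of_int (in_load y S x)"
      unfolding removed of_int_le_iff using fractional_orientation_nonneg[OF y, of v x] by linarith
    then show ?thesis
      unfolding if_not_P[OF False] using load_x by linarith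
  qed
qed

lemma avg_degree_below_if_budgets_negative:
  assumes y: "fractional_orientation E N y" and edges: "\<forall>e\<in>E. card e = 2" and "0 < N"
    and "finite S" and negative: "\<forall>x\<in>S. h x < 0"
    and load: "\<forall>x\<in>S. 2 * real_of_int (in_load y S x) < real_of_int N * (c + real_of_int (h x) + 1)"
  shows "avg_degree_below E c S"
proof (rule avg_degree_below_if_in_load_bound[OF y edges \<open>0 < N\<close> \<open>finite S\<close>])
  have "real_of_int N * (c + real_of_int (h x) + 1) \<le> real_of_int N * c" if "x \<in> S" for x
  proof -
    have "real_of_int (h x) \<le> -1"
      using negative that by fastforce
    then show ?thesis
      using \<open>0 < N\<close> by (intro mult_left_mono) auto
  qed
  then show "\<forall>x\<in>S. 2 * real_of_int (in_load y S x) < real_of_int N * c"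
    using load by fastforce
qed

text \<open>A fractional analogue of acyclicity.\<close>

definition has_sources :: "('a \<Rightarrow> 'a \<Rightarrow> int) \<Rightarrow> int \<Rightarrow> 'a set \<Rightarrow> bool" where
  "has_sources y N S \<longleftrightarrow> (\<forall>T\<subseteq>S. T \<noteq> {} \<longrightarrow> (\<exists>v\<in>T. \<forall>u\<in>T. 2 * y u v \<le> N))"

lemma has_sources_subset: "has_sources y N S \<Longrightarrow> S' \<subseteq> S \<Longrightarrow> has_sources y N S'"
  unfolding has_sources_def by blast

section \<open>Orientations of minimal potential\<close>

definition move_unit :: "('a \<Rightarrow> 'a \<Rightarrow> int) \<Rightarrow> 'a \<Rightarrow> 'a \<Rightarrow> 'a \<Rightarrow> 'a \<Rightarrow> int" where
  "move_unit y u v =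
     (\<lambda>a b. y a b - (if (a, b) = (u, v) then 1 else 0) + (if (a, b) = (v, u) then 1 else 0))"

text \<open>The second sum penalises shares far from \<open>h = N/2\<close>. For a minimiser, a share above \<open>h\<close>
  sent from \<open>u\<close> to \<open>v\<close> forces \<open>v\<close> to be strictly less loaded than \<open>u\<close>, so every load-maximal
  vertex of a set is a source.\<close>

definition potential :: "'a set \<Rightarrow> int \<Rightarrow> ('a \<Rightarrow> 'a \<Rightarrow> int) \<Rightarrow> int" where
  "potential V h y = (\<Sum>x\<in>V. (in_load y V x)\<^sup>2) + (\<Sum>(a, b)\<in>V \<times> V. 2 * \<bar>y a b - h\<bar>)"

lemma fractional_orientation_move_unit:
  assumes y: "fractional_orientation E N y" and edges: "\<forall>e\<in>E. card e = 2" and "1 \<le> y u v"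
  shows "fractional_orientation E N (move_unit y u v)"
proof -
  have "{u, v} \<in> E"
    using y \<open>1 \<le> y u v\<close> unfolding fractional_orientation_def by force
  moreover from this have "u \<noteq> v"
    using edges by fastforce
  ultimately show ?thesis
    using y \<open>1 \<le> y u v\<close> unfolding fractional_orientation_def move_unit_def
    by (auto simp: insert_commute)
qed

lemma in_load_move_unit:
  assumes "finite V" "u \<in> V" "v \<in> V"
  shows "in_load (move_unit y u v) V x
    = in_load y V x - (if x = v then 1 else 0) + (if x = u then 1 else 0)"
  using assms by (simp add: in_load_def move_unit_def sum.distrib sum_subtractf)

lemma potential_move_unit:
  assumes "finite V" "u \<in> V" "v \<in> V" "u \<noteq> v" and pair: "y u v + y v u = 2 * h"
  shows "potential V h (move_unit y u v) = potential V h y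
    + 2 * in_load y V u - 2 * in_load y V v + 2 + 4 * (\<bar>y u v - 1 - h\<bar> - \<bar>y u v - h\<bar>)"
proof -
  let ?L = "in_load y V" and ?y' = "move_unit y u v"
  have "(in_load ?y' V x)\<^sup>2
      = (?L x)\<^sup>2 + (if x = u then 2 * ?L u + 1 else 0) + (if x = v then 1 - 2 * ?L v else 0)" for x
    using assms by (auto simp: in_load_move_unit power2_eq_square algebra_simps)
  then have squares: "(\<Sum>x\<in>V. (in_load ?y' V x)\<^sup>2) = (\<Sum>x\<in>V. (?L x)\<^sup>2) + 2 * ?L u - 2 * ?L v + 2"
    using assms by (simp add: sum.distrib)
  have "2 * \<bar>?y' (fst p) (snd p) - h\<bar> = 2 * \<bar>y (fst p) (snd p) - h\<bar>
      + (if p = (u, v) then 2 * (\<bar>y u v - 1 - h\<bar> - \<bar>y u v - h\<bar>) else 0)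
      + (if p = (v, u) then 2 * (\<bar>y v u + 1 - h\<bar> - \<bar>y v u - h\<bar>) else 0)" for p
    using assms by (auto simp: move_unit_def)
  moreover have "\<bar>y v u + 1 - h\<bar> = \<bar>y u v - 1 - h\<bar>" "\<bar>y v u - h\<bar> = \<bar>y u v - h\<bar>"
    using pair by linarith+
  ultimately have shares: "(\<Sum>(a, b)\<in>V \<times> V. 2 * \<bar>?y' a b - h\<bar>)
      = (\<Sum>(a, b)\<in>V \<times> V. 2 * \<bar>y a b - h\<bar>) + 4 * (\<bar>y u v - 1 - h\<bar> - \<bar>y u v - h\<bar>)"
    using assms by (simp add: case_prod_unfold sum.distrib)
  show ?thesis
    unfolding potential_def squares shares by simp
qed

lemma potential_nonneg: "0 \<le> potential V h y"
  unfolding potential_def by (intro add_nonneg_nonneg sum_nonneg) (auto simp: case_prod_unfold)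

lemma potential_minimizer_exists:
  assumes "0 \<le> h"
  obtains y where "fractional_orientation E (2 * h) y"
    and "\<And>z. fractional_orientation E (2 * h) z \<Longrightarrow> potential V h y \<le> potential V h z"
proof -
  have "fractional_orientation E (2 * h) (\<lambda>u v. if {u, v} \<in> E then h else 0)"
    using assms unfolding fractional_orientation_def by (auto simp: insert_commute)
  then obtain y where "fractional_orientation E (2 * h) y"
    and "\<forall>z. fractional_orientation E (2 * h) z \<longrightarrow> nat (potential V h y) \<le> nat (potential V h z)"
    using ex_has_least_nat[of "fractional_orientation E (2 * h)" _ "\<lambda>y. nat (potential V h y)"]
    by blast
  then show ?thesis
    using that potential_nonneg by (metis nat_le_eq_zle)
qed

lemma minimal_potential_in_loads:
  assumes y: "fractional_orientation E (2 * h) y" and edges: "\<forall>e\<in>E. e \<subseteq> V \<and> card e = 2"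
    and "finite V"
    and minimal: "\<And>z. fractional_orientation E (2 * h) z \<Longrightarrow> potential V h y \<le> potential V h z"
    and "1 \<le> y u v"
  shows "in_load y V v \<le> in_load y V u + 3" and "h < y u v \<Longrightarrow> in_load y V v < in_load y V u"
proof -
  have "{u, v} \<in> E"
    using y \<open>1 \<le> y u v\<close> unfolding fractional_orientation_def by force
  then have "u \<in> V" "v \<in> V" "u \<noteq> v" "y u v + y v u = 2 * h"
    using edges y unfolding fractional_orientation_def by fastforce+
  moreover have "potential V h y \<le> potential V h (move_unit y u v)"
    using minimal fractional_orientation_move_unit[OF y] edges \<open>1 \<le> y u v\<close> by blast
  ultimately have "0 \<le> 2 * in_load y V u - 2 * in_load y V v + 2
      + 4 * (\<bar>y u v - 1 - h\<bar> - \<bar>y u v - h\<bar>)"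
    using potential_move_unit[OF \<open>finite V\<close>] by fastforce
  moreover define t where "t = \<bar>y u v - 1 - h\<bar> - \<bar>y u v - h\<bar>"
  ultimately have change: "2 * in_load y V v \<le> 2 * in_load y V u + 2 + 4 * t"
    by simp
  moreover have "t \<le> 1"
    unfolding t_def by (simp add: abs_if)
  ultimately show "in_load y V v \<le> in_load y V u + 3"
    by linarith
  assume "h < y u v"
  then have "t = -1"
    unfolding t_def by (simp add: abs_if)
  then show "in_load y V v < in_load y V u"
    using change by linarith
qed

lemma has_sources_if_heavy_shares_decrease:
  fixes L :: "'a \<Rightarrow> int"
  assumes "finite S" and decrease: "\<And>u v. h < y u v \<Longrightarrow> L v < L u"
  shows "has_sources y (2 * h) S"
  unfolding has_sources_def
proof (intro allI impI)
  fix T assume "T \<subseteq> S" "T \<noteq> {}"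
  then have "finite T"
    using \<open>finite S\<close> finite_subset by blast
  moreover have "Max (L ` T) \<in> L ` T"
    using \<open>finite T\<close> \<open>T \<noteq> {}\<close> by simp
  ultimately obtain v where "v \<in> T" "L v = Max (L ` T)"
    by auto
  then have "v \<in> T" "\<forall>u\<in>T. L u \<le> L v"
    using \<open>finite T\<close> by simp_all
  moreover have "y u v \<le> h" if "u \<in> T" "\<forall>u\<in>T. L u \<le> L v" for u
    using that decrease[of u v] by (meson not_less)
  ultimately show "\<exists>v\<in>T. \<forall>u\<in>T. 2 * y u v \<le> 2 * h"
    by fastforce
qed

lemma exists_gap_below:
  fixes L :: "'a \<Rightarrow> int"
  assumes "finite V"
  shows "\<exists>t. D - 3 * int (card V) \<le> t \<and> t \<le> D \<and> (\<forall>x\<in>V. L x \<le> t - 4 \<or> t \<le> L x)"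
proof -
  define window where "window x = nat ((D - 1 - L x) div 3)" for x
  have "card (window ` V) < card {..card V}"
    using card_image_le[OF assms, of window] by simp
  then have "\<not> {..card V} \<subseteq> window ` V"
    using card_mono[of "window ` V" "{..card V}"] assms by fastforce
  then obtain j where "j \<le> card V" "j \<notin> window ` V"
    by auto
  moreover have "window x = j" if "D - 3 * int j - 3 \<le> L x" "L x \<le> D - 3 * int j - 1" for x
  proof -
    have "(D - 1 - L x) div 3 = int j"
      using that by presburger
    then show ?thesis
      unfolding window_def by simp
  qed
  ultimately show ?thesis
    by (intro exI[of _ "D - 3 * int j"]) force
qed

lemma in_load_above_gap:
  assumes y: "fractional_orientation E N y" and "finite V"
    and step: "\<And>u v. 1 \<le> y u v \<Longrightarrow> in_load y V v \<le> in_load y V u + 3"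
    and gap: "\<forall>x\<in>V. in_load y V x \<le> t - 4 \<or> t \<le> in_load y V x"
    and "t \<le> in_load y V v"
  shows "in_load y V v = in_load y {x \<in> V. t \<le> in_load y V x} v"
proof -
  define R where "R = {x \<in> V. t \<le> in_load y V x}"
  have "y u v = 0" if "u \<in> V - R" for u
  proof (rule ccontr)
    assume "y u v \<noteq> 0"
    then have "in_load y V v \<le> in_load y V u + 3"
      using step fractional_orientation_nonneg[OF y, of u v] by simp
    moreover have "in_load y V u \<le> t - 4"
      using that gap unfolding R_def by auto
    ultimately show False
      using \<open>t \<le> in_load y V v\<close> by linarith
  qed
  moreover have "R \<subseteq> V"
    unfolding R_def by blast
  ultimately have "in_load y V v = in_load y R v"
    using \<open>finite V\<close> by (simp add: in_load_def sum.subset_diff[of R V])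
  then show ?thesis
    unfolding R_def .
qed

text \<open>By local optimality, \<open>u\<close> sends load to \<open>v\<close> only if the load of \<open>v\<close> exceeds that of \<open>u\<close> by
  at most 3. Hence no vertex above a gap of width 3 in the loads receives load from below it, and
  the total load of those vertices is paid by the few edges among them.\<close>

lemma max_in_load_bound:
  assumes y: "fractional_orientation E N y" and edges: "\<forall>e\<in>E. card e = 2" and "finite V"
    and step: "\<And>u v. 1 \<le> y u v \<Longrightarrow> in_load y V v \<le> in_load y V u + 3"
    and slack: "\<And>X. X \<subseteq> V \<Longrightarrow> X \<noteq> {} \<Longrightarrow>
      2 * real (card (induced_edges E X)) \<le> (M - \<mu>) * real (card X)"
    and "0 < N" and large: "6 * real (card V) < real_of_int N * \<mu>"
    and "x \<in> V"
  shows "2 * real_of_int (in_load y V x) < real_of_int N * M"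
proof -
  let ?L = "in_load y V"
  define D where "D = Max (?L ` V)"
  have "D \<in> ?L ` V"
    unfolding D_def using \<open>finite V\<close> \<open>x \<in> V\<close> by (intro Max_in) auto
  have "?L x \<le> D"
    unfolding D_def using \<open>finite V\<close> \<open>x \<in> V\<close> by simp
  obtain t where t: "D - 3 * int (card V) \<le> t" "t \<le> D" "\<forall>x\<in>V. ?L x \<le> t - 4 \<or> t \<le> ?L x"
    using exists_gap_below[OF \<open>finite V\<close>] by blast
  define R where "R = {x \<in> V. t \<le> ?L x}"
  have "finite R" "R \<subseteq> V" "R \<noteq> {}"
    using \<open>finite V\<close> \<open>D \<in> ?L ` V\<close> t(2) unfolding R_def by auto
  have closed: "?L v = in_load y R v" if "v \<in> R" for v
    using in_load_above_gap[OF y \<open>finite V\<close> step t(3)] that unfolding R_def by blast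
  have "int (card R) * t \<le> (\<Sum>v\<in>R. in_load y R v)"
    using closed by (intro sum_bounded_below) (simp add: R_def)
  also have "\<dots> = N * int (card (induced_edges E R))"
    using sum_in_load[OF y edges \<open>finite R\<close>] .
  finally have "real_of_int (int (card R) * t) \<le> real_of_int (N * int (card (induced_edges E R)))"
    by (simp only: of_int_le_iff)
  then have "2 * (real (card R) * t) \<le> N * (2 * real (card (induced_edges E R)))"
    by simp
  also have "\<dots> \<le> N * ((M - \<mu>) * real (card R))"
    using slack[OF \<open>R \<subseteq> V\<close> \<open>R \<noteq> {}\<close>] \<open>0 < N\<close> by simp
  finally have "real (card R) * (2 * t) \<le> real (card R) * (N * (M - \<mu>))"
    by (simp add: algebra_simps)
  then have "2 * t \<le> N * (M - \<mu>)"
    using \<open>finite R\<close> \<open>R \<noteq> {}\<close> by (simp add: card_gt_0_iff)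
  then show ?thesis
    using \<open>?L x \<le> D\<close> t(1) large by (simp add: algebra_simps)
qed

lemma fractional_orientation_exists:
  assumes "finite V" and edges: "\<forall>e\<in>E. e \<subseteq> V \<and> card e = 2" and "avg_degree_below E M V"
  obtains N y where "0 < N" "fractional_orientation E N y" "has_sources y N V"
    and "\<forall>x\<in>V. 2 * real_of_int (in_load y V x) < real_of_int N * M"
proof -
  obtain \<mu> :: real where "0 < \<mu>" and slack: "\<And>X. X \<subseteq> V \<Longrightarrow> X \<noteq> {} \<Longrightarrow>
      2 * real (card (induced_edges E X)) \<le> (M - \<mu>) * real (card X)"
    using avg_degree_below_uniform_slack[OF \<open>finite V\<close> \<open>avg_degree_below E M V\<close>] by blast
  obtain K :: nat where "6 * real (card V) / \<mu> < real K"
    using reals_Archimedean2 by blast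
  define h where "h = int K + 1"
  have "6 * real (card V) < real_of_int (2 * h) * \<mu>"
    using \<open>6 * real (card V) / \<mu> < real K\<close> \<open>0 < \<mu>\<close> unfolding h_def
    by (simp add: divide_less_eq algebra_simps)
  obtain y where y: "fractional_orientation E (2 * h) y"
    and minimal: "\<And>z. fractional_orientation E (2 * h) z \<Longrightarrow> potential V h y \<le> potential V h z"
    using potential_minimizer_exists[of h E V] h_def by auto
  note loads = minimal_potential_in_loads[OF y edges \<open>finite V\<close> minimal]
  have "has_sources y (2 * h) V"
    using loads(2) h_def by (intro has_sources_if_heavy_shares_decrease \<open>finite V\<close>) simp
  moreover have "0 < 2 * h"
    using h_def by simp
  moreover have "\<forall>x\<in>V. 2 * real_of_int (in_load y V x) < real_of_int (2 * h) * M"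
    using max_in_load_bound[OF y _ \<open>finite V\<close> loads(1) slack \<open>0 < 2 * h\<close>
      \<open>6 * real (card V) < _\<close>] edges by blast
  ultimately show ?thesis
    using that y by blast
qed

section \<open>Greedy splitting\<close>

text \<open>\<open>h x\<close> is the remaining budget of \<open>x\<close>. Removing a source \<open>v\<close> of nonnegative budget costs each
  neighbour of nonnegative budget one unit of budget and at least \<open>N/2\<close> of load, so the load
  invariant survives, and \<open>v\<close> can be placed first in the degeneracy order of the rest.\<close>

lemma avg_degree_below_degenerate_split:
  assumes y: "fractional_orientation E N y" and edges: "\<forall>e\<in>E. card e = 2" and "0 < N"
  shows "finite S \<Longrightarrow> has_sources y N S \<Longrightarrow>
    \<forall>x\<in>S. 2 * real_of_int (in_load y S x) < real_of_int N * (c + real_of_int (h x) + 1) \<Longrightarrow>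
    \<exists>A\<subseteq>S. avg_degree_below E c A \<and> degenerate E h (S - A)"
proof (induction "card {x \<in> S. 0 \<le> h x}" arbitrary: S h rule: less_induct)
  case less
  define Q where "Q = {x \<in> S. 0 \<le> h x}"
  show ?case
  proof (cases "Q = {}")
    case True
    then have "avg_degree_below E c S"
      using less.prems unfolding Q_def
      by (intro avg_degree_below_if_budgets_negative[OF y edges \<open>0 < N\<close>]) auto
    then show ?thesis
      by (intro exI[of _ S]) (simp add: degenerate_def)
  next
    case False
    moreover have "Q \<subseteq> S"
      unfolding Q_def by blast
    ultimately obtain v where "v \<in> Q" and source: "\<forall>u\<in>Q. 2 * y u v \<le> N"
      using less.prems(2) unfolding has_sources_def by blast
    then have "v \<in> S" "0 \<le> h v"
      unfolding Q_def by auto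
    define h' where "h' = (\<lambda>x. if {x, v} \<in> E \<and> 0 \<le> h x then h x - 1 else h x)"
    have "{x \<in> S - {v}. 0 \<le> h' x} \<subseteq> Q - {v}" "finite Q"
      using less.prems(1) unfolding Q_def h'_def by auto
    then have "card {x \<in> S - {v}. 0 \<le> h' x} < card Q"
      using \<open>v \<in> Q\<close> by (meson card_Diff1_less card_mono finite_Diff le_less_trans)
    moreover have "has_sources y N (S - {v})"
      using less.prems(2) by (rule has_sources_subset) blast
    moreover have "\<forall>x\<in>S - {v}. 2 * real_of_int (in_load y (S - {v}) x)
        < real_of_int N * (c + real_of_int (h' x) + 1)"
      using in_load_remove_source[OF y less.prems(1) \<open>v \<in> S\<close> less.prems(3)] source
      unfolding h'_def Q_def by blast
    ultimately obtain A where A: "A \<subseteq> S - {v}" "avg_degree_below E c A" "degenerate E h' (S - {v} - A)"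
      using less.hyps less.prems(1) unfolding Q_def by blast
    have "degenerate E h (insert v (S - {v} - A))"
      using A(3) less.prems(1) \<open>0 \<le> h v\<close> unfolding h'_def
      by (intro degenerate_insert[OF edges]) auto
    moreover have "insert v (S - {v} - A) = S - A"
      using A(1) \<open>v \<in> S\<close> by blast
    ultimately show ?thesis
      using A(1,2) by (intro exI[of _ A]) auto
  qed
qed

lemma exists_avg_degree_below_degenerate_partition:
  assumes "finite V" and graph: "\<forall>e\<in>E. e \<subseteq> V \<and> card e = 2"
    and "avg_degree_below E (c + real d + 1) V"
  obtains A where "A \<subseteq> V" "avg_degree_below E c A" "degenerate E (\<lambda>_. int d) (V - A)"
proof -
  obtain N y where "0 < N" "fractional_orientation E N y" "has_sources y N V"
    and "\<forall>x\<in>V. 2 * real_of_int (in_load y V x) < real_of_int N * (c + real d + 1)"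
    by (rule fractional_orientation_exists[OF \<open>finite V\<close> graph \<open>avg_degree_below E _ V\<close>])
  moreover have "\<forall>e\<in>E. card e = 2"
    using graph by blast
  ultimately show ?thesis
    using avg_degree_below_degenerate_split[of E N y V c "\<lambda>_. int d"] \<open>finite V\<close> that by auto
qed

theorem mainTheorem13:
  fixes V :: "'a set" and E :: "'a set set" and c\<^sub>1 :: real and k :: nat
  assumes "c\<^sub>1 > 0" and "k \<ge> 2"
    and "simple_graph V E"
    and "mad V E < ereal (c\<^sub>1 + real k)"
  shows "\<exists>A B. A \<union> B = V \<and> A \<inter> B = {}
           \<and> mad A (induced_edges E A) < ereal c\<^sub>1
           \<and> mad B (induced_edges E B) < ereal (2 * real k - 2)"
proof -
  have "finite V" and graph: "\<forall>e\<in>E. e \<subseteq> V \<and> card e = 2"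
    using \<open>simple_graph V E\<close> unfolding simple_graph_def by auto
  have "c\<^sub>1 + real k = c\<^sub>1 + real (k - 1) + 1"
    using \<open>k \<ge> 2\<close> by (simp add: of_nat_diff)
  then have "avg_degree_below E (c\<^sub>1 + real (k - 1) + 1) V"
    using avg_degree_below_if_mad_less[OF \<open>finite V\<close> \<open>mad V E < _\<close>] by (simp only:)
  then obtain A where "A \<subseteq> V" "avg_degree_below E c\<^sub>1 A" "degenerate E (\<lambda>_. int (k - 1)) (V - A)"
    by (rule exists_avg_degree_below_degenerate_partition[OF \<open>finite V\<close> graph])
  then have "avg_degree_below E (2 * real (k - 1)) (V - A)"
    using graph \<open>finite V\<close> \<open>k \<ge> 2\<close> by (intro avg_degree_below_if_degenerate) auto
  moreover have "2 * real (k - 1) = 2 * real k - 2"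
    using \<open>k \<ge> 2\<close> by (simp add: of_nat_diff)
  ultimately have "avg_degree_below E (2 * real k - 2) (V - A)"
    by (simp only:)
  then have "mad (V - A) (induced_edges E (V - A)) < ereal (2 * real k - 2)"
    using \<open>finite V\<close> by (simp add: mad_induced_less_iff_avg_degree_below)
  moreover have "mad A (induced_edges E A) < ereal c\<^sub>1"
    using \<open>avg_degree_below E c\<^sub>1 A\<close> \<open>A \<subseteq> V\<close> \<open>finite V\<close>
    by (simp add: mad_induced_less_iff_avg_degree_below finite_subset)
  ultimately show ?thesis
    using \<open>A \<subseteq> V\<close> by (intro exI[of _ A] exI[of _ "V - A"]) blast
qed

end
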